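(* Let $p$ be a prime, let $\mathcal{F}$ be a fusion system (not necessarily saturated) on a finite $p$-group $S$, and let $\mathcal{H}$ be a collection of subgroups of $S$ which is closed under $\mathcal{F}$-conjugation and under taking subgroups. Let $X_0$ be a virtual $S$-set with rational coefficients such that $|X_0^P|=|X_0^{P'}|$ for all $P,P'\le S$ with $P,P'\notin\mathcal{H}$ that are $\mathcal{F}$-conjugate. Then there exists a virtual $S$-set $X$ with rational coefficients such that: (a) $|X^P|=|X^{P'}|$ for all $\mathcal{F}$-conjugate $P,P'\le S$; (b) $|X^P|=|X_0^P|$ for all $P\le S$ with $P\notin\mathcal{H}$; and (c) $X-X_0$ is a virtual $S$-set with nonnegative rational coefficients.
   Context: A fusion system $\mathcal{F}$ on a finite $p$-group $S$ is a category whose objects are the subgroups of $S$, whose morphism sets $\mathrm{Hom}_{\mathcal{F}}(P,Q)$ are sets of injective group homomorphisms $P\to Q$, such that every map $u\mapsto sus^{-1}$ ($s\in S$, $sPs^{-1}\le Q$) lies in $\mathrm{Hom}_{\mathcal{F}}(P,Q)$, and every $\varphi\in\mathrm{Hom}_{\mathcal{F}}(P,Q)$ induces an isomorphism $P\to\varphi(P)$ in $\mathcal{F}$ whose inverse is also in $\mathcal{F}$; no saturation is assumed. Subgroups $P,P'\le S$ are $\mathcal{F}$-conjugate if there is an isomorphism $P\to P'$ in $\mathcal{F}$. A virtual $S$-set with rational coefficients is an element $\sum_H c_H\, S/H$ of $\mathbb{Q}\otimes_{\mathbb{Z}}B(S)$, where $H$ runs over representatives of $S$-conjugacy classes of subgroups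 of $S$ and $c_H\in\mathbb{Q}$; it has nonnegative rational coefficients if all $c_H\ge 0$. For such $X=\sum_H c_H\,S/H$ and $P\le S$, $|X^P|$ denotes $\sum_H c_H\,|(S/H)^P|$, where $(S/H)^P$ is the set of $P$-fixed points of the $S$-set $S/H$. *)

theory Defs
  imports Complex_Main "HOL-Algebra.Coset" "HOL-Computational_Algebra.Primes"
begin

definition finite_p_group :: "('a, 'b) monoid_scheme \<Rightarrow> nat \<Rightarrow> bool" where
  "finite_p_group S p \<longleftrightarrow> group S \<and> prime p \<and> finite (carrier S) \<and>
     (\<exists>n. card (carrier S) = p ^ n)"

definition conj_map :: "('a, 'b) monoid_scheme \<Rightarrow> 'a \<Rightarrow> 'a set \<Rightarrow> 'a \<Rightarrow> 'a" where
  "conj_map S s P = restrict (\<lambda>u. s \<otimes>\<^bsub>S\<^esub> u \<otimes>\<^bsub>S\<^esub> inv\<^bsub>S\<^esub> s) P"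

text \<open>A (not necessarily saturated) fusion system on S: F P Q is the set of morphisms
  P \<rightarrow> Q, represented as functions extensional on P.\<close>
definition fusion_system ::
  "('a, 'b) monoid_scheme \<Rightarrow> ('a set \<Rightarrow> 'a set \<Rightarrow> ('a \<Rightarrow> 'a) set) \<Rightarrow> bool" where
  "fusion_system S F \<longleftrightarrow>
     (\<forall>P Q \<phi>. \<phi> \<in> F P Q \<longrightarrow>
        subgroup P S \<and> subgroup Q S \<and> \<phi> \<in> extensional P \<and> inj_on \<phi> P \<and>
        \<phi> \<in> hom (S\<lparr>carrier := P\<rparr>) (S\<lparr>carrier := Q\<rparr>)) \<and>
     (\<forall>P Q R \<phi> \<psi>. \<phi> \<in> F P Q \<longrightarrow> \<psi> \<in> F Q R \<longrightarrow> restrict (\<psi> \<circ> \<phi>) P \<in> F P R) \<and>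
     (\<forall>P Q s. subgroup P S \<longrightarrow> subgroup Q S \<longrightarrow> s \<in> carrier S \<longrightarrow>
        (\<lambda>u. s \<otimes>\<^bsub>S\<^esub> u \<otimes>\<^bsub>S\<^esub> inv\<^bsub>S\<^esub> s) ` P \<subseteq> Q \<longrightarrow> conj_map S s P \<in> F P Q) \<and>
     (\<forall>P Q \<phi>. \<phi> \<in> F P Q \<longrightarrow>
        \<phi> \<in> F P (\<phi> ` P) \<and> restrict (inv_into P \<phi>) (\<phi> ` P) \<in> F (\<phi> ` P) P)"

definition F_conjugate ::
  "('a set \<Rightarrow> 'a set \<Rightarrow> ('a \<Rightarrow> 'a) set) \<Rightarrow> 'a set \<Rightarrow> 'a set \<Rightarrow> bool" where
  "F_conjugate F P P' \<longleftrightarrow> (\<exists>\<phi> \<in> F P P'. \<phi> ` P = P')"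

definition coset_space :: "('a, 'b) monoid_scheme \<Rightarrow> 'a set \<Rightarrow> 'a set set" where
  "coset_space S H = {g <#\<^bsub>S\<^esub> H | g. g \<in> carrier S}"

definition fixed_cosets :: "('a, 'b) monoid_scheme \<Rightarrow> 'a set \<Rightarrow> 'a set \<Rightarrow> 'a set set" where
  "fixed_cosets S H P = {C \<in> coset_space S H. \<forall>u \<in> P. u <#\<^bsub>S\<^esub> C = C}"

text \<open>A virtual S-set with rational coefficients is encoded by a function c on subgroups,
  standing for \<Sum>_{H \<le> S} c(H) [S/H]. Its coefficient at the S-conjugacy class of H
  (in the usual basis of representatives) is the sum of c over that class.\<close>
definition subgroups_of :: "('a, 'b) monoid_scheme \<Rightarrow> 'a set set" where
  "subgroups_of S = {H. subgroup H S}"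

definition S_conj_class :: "('a, 'b) monoid_scheme \<Rightarrow> 'a set \<Rightarrow> 'a set set" where
  "S_conj_class S H = {(\<lambda>u. g \<otimes>\<^bsub>S\<^esub> u \<otimes>\<^bsub>S\<^esub> inv\<^bsub>S\<^esub> g) ` H | g. g \<in> carrier S}"

definition vcoeff :: "('a, 'b) monoid_scheme \<Rightarrow> ('a set \<Rightarrow> rat) \<Rightarrow> 'a set \<Rightarrow> rat" where
  "vcoeff S c H = (\<Sum>K \<in> S_conj_class S H. c K)"

definition vmark :: "('a, 'b) monoid_scheme \<Rightarrow> ('a set \<Rightarrow> rat) \<Rightarrow> 'a set \<Rightarrow> rat" where
  "vmark S c P = (\<Sum>H \<in> subgroups_of S. c H * of_nat (card (fixed_cosets S H P)))"

definition nonneg_virtual :: "('a, 'b) monoid_scheme \<Rightarrow> ('a set \<Rightarrow> rat) \<Rightarrow> bool" where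
  "nonneg_virtual S c \<longleftrightarrow> (\<forall>H. subgroup H S \<longrightarrow> vcoeff S c H \<ge> 0)"

end

theory Submission
  imports Defs
begin

text \<open>Working from the largest subgroups downwards, one adds to the virtual set, for every
  \<open>\<F>\<close>-class of subgroups in \<open>\<H>\<close> of order \<open>k\<close>, a nonnegative multiple of the transitive
  \<open>S\<close>-sets \<open>S/Q\<close> of that class, raising the marks on the class to their maximum. The mark of
  \<open>S/Q\<close> at \<open>P\<close> vanishes unless \<open>P\<close> is \<open>S\<close>-subconjugate to \<open>Q\<close>, so this changes no mark outside
  \<open>\<H>\<close> and no mark at larger subgroups; at subgroups of order \<open>k\<close> only the \<open>S\<close>-conjugates
  of \<open>Q\<close> are affected.\<close>

definition conj_set :: "('a, 'b) monoid_scheme \<Rightarrow> 'a \<Rightarrow> 'a set \<Rightarrow> 'a set" where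
  "conj_set S g P = (\<lambda>u. g \<otimes>\<^bsub>S\<^esub> u \<otimes>\<^bsub>S\<^esub> inv\<^bsub>S\<^esub> g) ` P"

context group
begin

lemma conj_set_conj_set:
  assumes "g \<in> carrier G" "h \<in> carrier G" "P \<subseteq> carrier G"
  shows "conj_set G g (conj_set G h P) = conj_set G (g \<otimes> h) P"
  unfolding conj_set_def image_image
proof (rule image_cong[OF refl])
  fix u assume "u \<in> P"
  with assms show "g \<otimes> (h \<otimes> u \<otimes> inv h) \<otimes> inv g = g \<otimes> h \<otimes> u \<otimes> inv (g \<otimes> h)"
    by (auto simp: inv_mult_group m_assoc)
qed

lemma conj_set_one: "P \<subseteq> carrier G \<Longrightarrow> conj_set G \<one> P = P"
  unfolding conj_set_def by (auto simp: subset_eq image_iff)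

lemma conj_set_inv_conj_set:
  "g \<in> carrier G \<Longrightarrow> P \<subseteq> carrier G \<Longrightarrow> conj_set G (inv g) (conj_set G g P) = P"
  by (simp add: conj_set_conj_set conj_set_one)

lemma card_conj_set:
  assumes "g \<in> carrier G" "P \<subseteq> carrier G"
  shows "card (conj_set G g P) = card P"
  unfolding conj_set_def using assms by (intro card_image) (auto simp: inj_on_def subset_eq)

lemma subgroup_conj_set:
  assumes g: "g \<in> carrier G" and P: "subgroup P G"
  shows "subgroup (conj_set G g P) G"
proof (rule subgroupI)
  have Pc: "P \<subseteq> carrier G" using P subgroup.subset by blast
  show "conj_set G g P \<subseteq> carrier G" using g Pc unfolding conj_set_def by auto
  show "conj_set G g P \<noteq> {}" using subgroup.one_closed[OF P] unfolding conj_set_def by blast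
  fix a b assume "a \<in> conj_set G g P" "b \<in> conj_set G g P"
  then obtain u v where uv: "u \<in> P" "v \<in> P"
    and ab: "a = g \<otimes> u \<otimes> inv g" "b = g \<otimes> v \<otimes> inv g"
    unfolding conj_set_def by blast
  have "u \<in> carrier G" "v \<in> carrier G" using uv Pc by auto
  moreover have "inv g \<otimes> (g \<otimes> w) = w" if "w \<in> carrier G" for w
    using that g by (simp add: m_assoc[symmetric])
  ultimately have "inv a = g \<otimes> inv u \<otimes> inv g" "a \<otimes> b = g \<otimes> (u \<otimes> v) \<otimes> inv g"
    using g ab by (simp_all add: inv_mult_group m_assoc)
  moreover have "inv u \<in> P" "u \<otimes> v \<in> P"
    using uv subgroup.m_inv_closed[OF P] subgroup.m_closed[OF P] by auto
  ultimately show "inv a \<in> conj_set G g P" "a \<otimes> b \<in> conj_set G g P"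
    unfolding conj_set_def by (auto intro: image_eqI)
qed

lemma S_conj_class_eq_conj_sets: "S_conj_class G H = {conj_set G g H | g. g \<in> carrier G}"
  by (simp add: S_conj_class_def conj_set_def)

lemma self_in_S_conj_class: "P \<subseteq> carrier G \<Longrightarrow> P \<in> S_conj_class G P"
  unfolding S_conj_class_eq_conj_sets using conj_set_one[symmetric] one_closed by blast

lemma S_conj_class_eq_if_mem:
  assumes Q: "Q \<in> S_conj_class G P" and Pc: "P \<subseteq> carrier G"
  shows "S_conj_class G Q = S_conj_class G P"
proof -
  obtain g where g: "g \<in> carrier G" and Qg: "Q = conj_set G g P"
    using Q unfolding S_conj_class_eq_conj_sets by blast
  have "conj_set G h Q = conj_set G (h \<otimes> g) P" if "h \<in> carrier G" for h
    using that g Pc Qg conj_set_conj_set by simp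
  moreover have "conj_set G h P = conj_set G (h \<otimes> inv g) Q" if "h \<in> carrier G" for h
    using that g Pc Qg conj_set_conj_set by (simp add: m_assoc)
  ultimately show ?thesis
    unfolding S_conj_class_eq_conj_sets using g by (blast intro: m_closed inv_closed)
qed

lemma finite_fixed_cosets:
  assumes "finite (carrier G)" "H \<subseteq> carrier G"
  shows "finite (fixed_cosets G H P)"
proof -
  have "fixed_cosets G H P \<subseteq> Pow (carrier G)"
    unfolding fixed_cosets_def coset_space_def using l_coset_subset_G assms(2) by auto
  then show ?thesis using assms(1) finite_subset by blast
qed

lemma self_in_fixed_cosets:
  assumes "subgroup P G"
  shows "P \<in> fixed_cosets G P P"
proof -
  have Pc: "P \<subseteq> carrier G" using assms subgroup.subset by blast
  have "\<one> <# P = P" using lcos_mult_one Pc by blast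
  then have "P \<in> coset_space G P" unfolding coset_space_def by force
  moreover have "u <# P = P" if "u \<in> P" for u
  proof -
    have "u \<in> \<one> <# P" using that lcos_mult_one Pc by simp
    then show ?thesis
      using l_repr_independence[OF _ one_closed assms] lcos_mult_one Pc by simp
  qed
  ultimately show ?thesis unfolding fixed_cosets_def by blast
qed

lemma card_fixed_cosets_conj_set_le:
  assumes fin: "finite (carrier G)" and H: "subgroup H G" and g: "g \<in> carrier G"
    and Pc: "P \<subseteq> carrier G"
  shows "card (fixed_cosets G H P) \<le> card (fixed_cosets G H (conj_set G g P))"
proof (rule card_inj_on_le)
  have Hc: "H \<subseteq> carrier G" using H subgroup.subset by blast
  show "finite (fixed_cosets G H (conj_set G g P))" using finite_fixed_cosets[OF fin Hc] .
  show "(\<lambda>C. g <# C) ` fixed_cosets G H P \<subseteq> fixed_cosets G H (conj_set G g P)"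
  proof clarify
    fix C assume "C \<in> fixed_cosets G H P"
    then obtain a where a: "a \<in> carrier G" "C = a <# H" and fixed: "\<forall>u\<in>P. u <# C = C"
      unfolding fixed_cosets_def coset_space_def by blast
    have Cc: "C \<subseteq> carrier G" using a l_coset_subset_G Hc by simp
    have "g <# C = (g \<otimes> a) <# H" using a lcos_m_assoc Hc g by simp
    then have "g <# C \<in> coset_space G H" unfolding coset_space_def using a g by blast
    moreover have "w <# (g <# C) = g <# C" if "w \<in> conj_set G g P" for w
    proof -
      obtain u where u: "u \<in> P" "w = g \<otimes> u \<otimes> inv g"
        using \<open>w \<in> conj_set G g P\<close> unfolding conj_set_def by blast
      have uc: "u \<in> carrier G" using u Pc by auto
      have "w <# (g <# C) = (w \<otimes> g) <# C" using lcos_m_assoc Cc g u uc by simp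
      also have "w \<otimes> g = g \<otimes> u" using u uc g by (simp add: m_assoc)
      also have "(g \<otimes> u) <# C = g <# (u <# C)" using lcos_m_assoc Cc g uc by simp
      finally show ?thesis using fixed u by simp
    qed
    ultimately show "g <# C \<in> fixed_cosets G H (conj_set G g P)"
      unfolding fixed_cosets_def by blast
  qed
  show "inj_on (\<lambda>C. g <# C) (fixed_cosets G H P)"
  proof (rule inj_onI)
    fix C D assume "C \<in> fixed_cosets G H P" "D \<in> fixed_cosets G H P" "g <# C = g <# D"
    from this(1,2) have "C \<subseteq> carrier G" "D \<subseteq> carrier G"
      using l_coset_subset_G Hc unfolding fixed_cosets_def coset_space_def by auto
    then have "inv g <# (g <# C) = C" "inv g <# (g <# D) = D"
      using lcos_m_assoc g lcos_mult_one by auto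
    then show "C = D" using \<open>g <# C = g <# D\<close> by metis
  qed
qed

lemma card_fixed_cosets_conj_set:
  assumes "finite (carrier G)" "subgroup H G" "g \<in> carrier G" "P \<subseteq> carrier G"
  shows "card (fixed_cosets G H (conj_set G g P)) = card (fixed_cosets G H P)"
proof -
  have "conj_set G g P \<subseteq> carrier G" using assms(3,4) unfolding conj_set_def by auto
  then have "card (fixed_cosets G H (conj_set G g P)) \<le> card (fixed_cosets G H P)"
    using card_fixed_cosets_conj_set_le[OF assms(1,2), of "inv g" "conj_set G g P"] assms
    by (simp add: conj_set_inv_conj_set)
  then show ?thesis using card_fixed_cosets_conj_set_le[OF assms] by simp
qed

lemma subconj_if_fixed_cosets_nonempty:
  assumes H: "subgroup H G" and Pc: "P \<subseteq> carrier G" and ne: "fixed_cosets G H P \<noteq> {}"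
  shows "\<exists>g\<in>carrier G. conj_set G g P \<subseteq> H"
proof -
  have Hc: "H \<subseteq> carrier G" using H subgroup.subset by blast
  obtain a where a: "a \<in> carrier G" and fixed: "\<forall>u\<in>P. u <# (a <# H) = a <# H"
    using ne unfolding fixed_cosets_def coset_space_def by blast
  have "inv a \<otimes> u \<otimes> a \<in> H" if u: "u \<in> P" for u
  proof -
    have uc: "u \<in> carrier G" using u Pc by auto
    have "(u \<otimes> a) <# H = u <# (a <# H)" using lcos_m_assoc Hc uc a by blast
    then have "(u \<otimes> a) <# H = a <# H" using fixed u by simp
    moreover have "u \<otimes> a \<in> (u \<otimes> a) <# H"
      using subgroup.one_closed[OF H] uc a unfolding l_coset_def by force
    ultimately obtain h where h: "h \<in> H" "u \<otimes> a = a \<otimes> h" unfolding l_coset_def by auto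
    have "inv a \<otimes> u \<otimes> a = inv a \<otimes> (a \<otimes> h)" using a uc h(2) by (simp add: m_assoc)
    then show ?thesis using h Hc a by (auto simp: m_assoc[symmetric])
  qed
  then have "conj_set G (inv a) P \<subseteq> H" unfolding conj_set_def using a by auto
  then show ?thesis using a by blast
qed

lemma finite_subgroups_of: "finite (carrier G) \<Longrightarrow> finite (subgroups_of G)"
  unfolding subgroups_of_def
  by (rule finite_subset[of _ "Pow (carrier G)"]) (auto dest: subgroup.subset)

lemma vmark_add: "vmark G (\<lambda>H. c H + d H) P = vmark G c P + vmark G d P"
  unfolding vmark_def by (simp add: distrib_right sum.distrib)

lemma vmark_conj_set:
  assumes "finite (carrier G)" "g \<in> carrier G" "P \<subseteq> carrier G"
  shows "vmark G c (conj_set G g P) = vmark G c P"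
  unfolding vmark_def subgroups_of_def
  using card_fixed_cosets_conj_set[OF assms(1) _ assms(2,3)] by simp

lemma vmark_eq_0_if_not_subconj:
  assumes "P \<subseteq> carrier G"
    and "\<And>Q g. subgroup Q G \<Longrightarrow> c Q \<noteq> 0 \<Longrightarrow> g \<in> carrier G \<Longrightarrow> \<not> conj_set G g P \<subseteq> Q"
  shows "vmark G c P = 0"
  unfolding vmark_def
proof (rule sum.neutral, rule ballI)
  fix Q assume "Q \<in> subgroups_of G"
  then have "c Q = 0 \<or> fixed_cosets G Q P = {}"
    using assms subconj_if_fixed_cosets_nonempty unfolding subgroups_of_def by blast
  then show "c Q * of_nat (card (fixed_cosets G Q P)) = 0" by auto
qed

lemma S_conj_class_subset_subgroups_of:
  "subgroup P G \<Longrightarrow> S_conj_class G P \<subseteq> subgroups_of G"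
  unfolding S_conj_class_eq_conj_sets subgroups_of_def using subgroup_conj_set by auto

lemma finite_S_conj_class: "finite (carrier G) \<Longrightarrow> subgroup P G \<Longrightarrow> finite (S_conj_class G P)"
  using S_conj_class_subset_subgroups_of finite_subgroups_of finite_subset by metis

lemma vmark_eq_sum_S_conj_class:
  assumes fin: "finite (carrier G)" and P: "subgroup P G"
    and supp: "\<And>Q. subgroup Q G \<Longrightarrow> c Q \<noteq> 0 \<Longrightarrow> card Q \<le> card P"
  shows "vmark G c P = (\<Sum>Q\<in>S_conj_class G P. c Q * of_nat (card (fixed_cosets G Q Q)))"
proof -
  have Pc: "P \<subseteq> carrier G" using P subgroup.subset by blast
  note class_sub = S_conj_class_subset_subgroups_of[OF P]
  have "vmark G c P = (\<Sum>Q\<in>S_conj_class G P. c Q * of_nat (card (fixed_cosets G Q P)))"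
    unfolding vmark_def
  proof (rule sum.mono_neutral_right[OF finite_subgroups_of[OF fin] class_sub], rule ballI)
    fix Q assume Q: "Q \<in> subgroups_of G - S_conj_class G P"
    then have Qs: "subgroup Q G" unfolding subgroups_of_def by blast
    have "fixed_cosets G Q P = {}" if "c Q \<noteq> 0"
    proof (rule ccontr)
      assume "fixed_cosets G Q P \<noteq> {}"
      then obtain g where g: "g \<in> carrier G" "conj_set G g P \<subseteq> Q"
        using subconj_if_fixed_cosets_nonempty[OF Qs Pc] by blast
      have "finite Q" using Qs fin finite_subset subgroup.subset by blast
      moreover have "card Q \<le> card (conj_set G g P)"
        using supp[OF Qs that] card_conj_set g Pc by simp
      ultimately have "conj_set G g P = Q" using card_seteq g(2) by blast
      then show False using Q g unfolding S_conj_class_eq_conj_sets by blast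
    qed
    then show "c Q * of_nat (card (fixed_cosets G Q P)) = 0" by (cases "c Q = 0") simp_all
  qed
  also have "\<dots> = (\<Sum>Q\<in>S_conj_class G P. c Q * of_nat (card (fixed_cosets G Q Q)))"
  proof (rule sum.cong[OF refl])
    fix Q assume "Q \<in> S_conj_class G P"
    then obtain g where g: "g \<in> carrier G" and Qg: "Q = conj_set G g P"
      unfolding S_conj_class_eq_conj_sets by blast
    have "P = conj_set G (inv g) Q" using Qg g Pc conj_set_inv_conj_set by simp
    moreover have "subgroup Q G" using Qg subgroup_conj_set g P by simp
    ultimately have "card (fixed_cosets G Q P) = card (fixed_cosets G Q Q)"
      using card_fixed_cosets_conj_set[OF fin _ inv_closed[OF g] subgroup.subset] by simp
    then show "c Q * of_nat (card (fixed_cosets G Q P)) = c Q * of_nat (card (fixed_cosets G Q Q))"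
      by simp
  qed
  finally show ?thesis .
qed

lemma fusion_system_morphismD:
  assumes "fusion_system G F" "\<phi> \<in> F P Q"
  shows "subgroup P G" "subgroup Q G" "inj_on \<phi> P"
  using assms(1)[unfolded fusion_system_def, THEN conjunct1, rule_format, OF assms(2)] by blast+

lemma fusion_system_compD:
  assumes "fusion_system G F" "\<phi> \<in> F P Q" "\<psi> \<in> F Q R"
  shows "restrict (\<psi> \<circ> \<phi>) P \<in> F P R"
  using assms(1)[unfolded fusion_system_def, THEN conjunct2, THEN conjunct1, rule_format]
    assms(2,3) .

lemma fusion_system_conj_mapD:
  assumes "fusion_system G F" "subgroup P G" "subgroup Q G" "g \<in> carrier G"
    "conj_set G g P \<subseteq> Q"
  shows "conj_map G g P \<in> F P Q"
  using assms(1)[unfolded fusion_system_def, THEN conjunct2, THEN conjunct2, THEN conjunct1,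
      rule_format] assms(2-5)
  unfolding conj_set_def .

lemma fusion_system_invD:
  assumes "fusion_system G F" "\<phi> \<in> F P Q"
  shows "restrict (inv_into P \<phi>) (\<phi> ` P) \<in> F (\<phi> ` P) P"
  using assms(1)[unfolded fusion_system_def, THEN conjunct2, THEN conjunct2, THEN conjunct2,
      rule_format, OF assms(2)] by blast

lemma F_conjugate_subgroups:
  assumes "fusion_system G F" "F_conjugate F P Q"
  shows "subgroup P G" "subgroup Q G"
  using assms fusion_system_morphismD unfolding F_conjugate_def by blast+

lemma card_F_conjugate:
  assumes "fusion_system G F" "F_conjugate F P Q"
  shows "card Q = card P"
  using assms fusion_system_morphismD(3) card_image unfolding F_conjugate_def by metis

lemma F_conjugate_conj_set:
  assumes F: "fusion_system G F" and P: "subgroup P G" and g: "g \<in> carrier G"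
  shows "F_conjugate F P (conj_set G g P)"
proof -
  have "conj_map G g P \<in> F P (conj_set G g P)"
    using fusion_system_conj_mapD[OF F P subgroup_conj_set[OF g P] g] by simp
  moreover have "conj_map G g P ` P = conj_set G g P"
    unfolding conj_map_def conj_set_def by auto
  ultimately show ?thesis unfolding F_conjugate_def by blast
qed

lemma F_conjugate_refl:
  assumes "fusion_system G F" "subgroup P G"
  shows "F_conjugate F P P"
  using F_conjugate_conj_set[OF assms one_closed] conj_set_one[OF subgroup.subset[OF assms(2)]]
  by simp

lemma F_conjugate_sym:
  assumes F: "fusion_system G F" and "F_conjugate F P Q"
  shows "F_conjugate F Q P"
proof -
  obtain \<phi> where \<phi>: "\<phi> \<in> F P Q" "\<phi> ` P = Q" using assms(2) unfolding F_conjugate_def by blast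
  have "restrict (inv_into P \<phi>) Q ` Q = P"
    using inv_into_image_cancel[OF fusion_system_morphismD(3)[OF F \<phi>(1)], of P] \<phi>(2) by simp
  then show ?thesis
    using fusion_system_invD[OF F \<phi>(1)] \<phi>(2) unfolding F_conjugate_def by blast
qed

lemma F_conjugate_trans:
  assumes F: "fusion_system G F" and "F_conjugate F P Q" "F_conjugate F Q R"
  shows "F_conjugate F P R"
proof -
  obtain \<phi> \<psi> where \<phi>: "\<phi> \<in> F P Q" "\<phi> ` P = Q" and \<psi>: "\<psi> \<in> F Q R" "\<psi> ` Q = R"
    using assms(2,3) unfolding F_conjugate_def by blast
  have "restrict (\<psi> \<circ> \<phi>) P ` P = R" using \<phi>(2) \<psi>(2) by force
  then show ?thesis
    using fusion_system_compD[OF F \<phi>(1) \<psi>(1)] unfolding F_conjugate_def by blast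
qed

end

locale fusion_collection = group G for G :: "('a, 'b) monoid_scheme" +
  fixes F :: "'a set \<Rightarrow> 'a set \<Rightarrow> ('a \<Rightarrow> 'a) set" and \<H> :: "'a set set"
  assumes finite_carrier: "finite (carrier G)"
    and fusion: "fusion_system G F"
    and subgroup_if_mem: "P \<in> \<H> \<Longrightarrow> subgroup P G"
    and mem_if_subgroup_le: "P \<in> \<H> \<Longrightarrow> subgroup Q G \<Longrightarrow> Q \<subseteq> P \<Longrightarrow> Q \<in> \<H>"
    and mem_if_F_conjugate: "P \<in> \<H> \<Longrightarrow> F_conjugate F P P' \<Longrightarrow> P' \<in> \<H>"
begin

definition F_class_max :: "('a set \<Rightarrow> rat) \<Rightarrow> 'a set \<Rightarrow> rat" where
  "F_class_max X P = Max (vmark G X ` {R. F_conjugate F P R})"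

lemma vmark_le_F_class_max:
  assumes "subgroup P G"
  shows "vmark G X P \<le> F_class_max X P"
proof -
  have "{R. F_conjugate F P R} \<subseteq> subgroups_of G"
    using F_conjugate_subgroups[OF fusion] unfolding subgroups_of_def by blast
  then have "finite {R. F_conjugate F P R}"
    using finite_subgroups_of[OF finite_carrier] finite_subset by blast
  then show ?thesis
    unfolding F_class_max_def using F_conjugate_refl[OF fusion assms] by (intro Max_ge) auto
qed

lemma F_class_max_F_conjugate:
  assumes "F_conjugate F P Q"
  shows "F_class_max X Q = F_class_max X P"
proof -
  have "F_conjugate F Q R \<longleftrightarrow> F_conjugate F P R" for R
    using F_conjugate_trans[OF fusion assms]
      F_conjugate_trans[OF fusion F_conjugate_sym[OF fusion assms]] by blast
  then have "{R. F_conjugate F Q R} = {R. F_conjugate F P R}" by simp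
  then show ?thesis unfolding F_class_max_def by simp
qed

text \<open>Weighting every conjugate of \<open>Q\<close> by \<open>1 / (|(S/Q)\<^sup>Q| \<cdot> |conjugacy class of Q|)\<close> makes
  the added mark at \<open>Q\<close> exactly the deficit of \<open>Q\<close> from the maximum over its \<open>\<F>\<close>-class.\<close>
definition level_correction :: "('a set \<Rightarrow> rat) \<Rightarrow> nat \<Rightarrow> 'a set \<Rightarrow> rat" where
  "level_correction X k Q =
    (if Q \<in> \<H> \<and> card Q = k
     then (F_class_max X Q - vmark G X Q) /
       (of_nat (card (fixed_cosets G Q Q)) * of_nat (card (S_conj_class G Q)))
     else 0)"

lemma level_correction_nonneg: "0 \<le> level_correction X k Q"
proof (cases "Q \<in> \<H> \<and> card Q = k")
  case True
  then have "vmark G X Q \<le> F_class_max X Q" using vmark_le_F_class_max subgroup_if_mem by blast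
  then show ?thesis using True unfolding level_correction_def by (simp add: divide_nonneg_nonneg)
qed (auto simp: level_correction_def)

lemma vmark_level_correction_not_mem:
  assumes P: "subgroup P G" and "P \<notin> \<H>"
  shows "vmark G (level_correction X k) P = 0"
proof (rule vmark_eq_0_if_not_subconj)
  show "P \<subseteq> carrier G" using P subgroup.subset by blast
  fix Q g assume "subgroup Q G" "level_correction X k Q \<noteq> 0" "g \<in> carrier G"
  then have "Q \<in> \<H>" unfolding level_correction_def by (simp split: if_splits)
  show "\<not> conj_set G g P \<subseteq> Q"
  proof
    assume "conj_set G g P \<subseteq> Q"
    then have "conj_set G g P \<in> \<H>"
      using mem_if_subgroup_le[OF \<open>Q \<in> \<H>\<close>] subgroup_conj_set[OF \<open>g \<in> carrier G\<close> P] by blast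
    moreover have "F_conjugate F (conj_set G g P) P"
      using F_conjugate_sym[OF fusion F_conjugate_conj_set[OF fusion P \<open>g \<in> carrier G\<close>]] .
    ultimately show False using mem_if_F_conjugate \<open>P \<notin> \<H>\<close> by blast
  qed
qed

lemma vmark_level_correction_above:
  assumes P: "subgroup P G" and "k < card P"
  shows "vmark G (level_correction X k) P = 0"
proof (rule vmark_eq_0_if_not_subconj)
  show Pc: "P \<subseteq> carrier G" using P subgroup.subset by blast
  fix Q g assume "subgroup Q G" "level_correction X k Q \<noteq> 0" "g \<in> carrier G"
  then have "card Q = k" unfolding level_correction_def by (simp split: if_splits)
  have "finite Q" using finite_carrier subgroup.subset[OF \<open>subgroup Q G\<close>] finite_subset by blast
  have "card (conj_set G g P) = card P" using card_conj_set \<open>g \<in> carrier G\<close> Pc .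
  then show "\<not> conj_set G g P \<subseteq> Q"
    using card_mono[OF \<open>finite Q\<close>, of "conj_set G g P"] \<open>card Q = k\<close> \<open>k < card P\<close> by auto
qed

lemma vmark_level_correction_at:
  assumes PH: "P \<in> \<H>" and Pk: "card P = k"
  shows "vmark G X P + vmark G (level_correction X k) P = F_class_max X P"
proof -
  have P: "subgroup P G" using subgroup_if_mem PH .
  have Pc: "P \<subseteq> carrier G" using P subgroup.subset by blast
  let ?C = "S_conj_class G P"
  let ?d = "F_class_max X P - vmark G X P"
  have summand: "level_correction X k Q * of_nat (card (fixed_cosets G Q Q)) = ?d / of_nat (card ?C)"
    if "Q \<in> ?C" for Q
  proof -
    obtain g where g: "g \<in> carrier G" and Qg: "Q = conj_set G g P"
      using \<open>Q \<in> ?C\<close> unfolding S_conj_class_eq_conj_sets by blast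
    have Qs: "subgroup Q G" using subgroup_conj_set[OF g P] Qg by simp
    have PQ: "F_conjugate F P Q" using F_conjugate_conj_set[OF fusion P g] Qg by simp
    have "Q \<in> \<H>" "card Q = k"
      using mem_if_F_conjugate[OF PH PQ] card_F_conjugate[OF fusion PQ] Pk by simp_all
    moreover have "F_class_max X Q = F_class_max X P" using F_class_max_F_conjugate[OF PQ] .
    moreover have "vmark G X Q = vmark G X P"
      using vmark_conj_set[OF finite_carrier g Pc] Qg by simp
    moreover have "S_conj_class G Q = ?C" using S_conj_class_eq_if_mem[OF \<open>Q \<in> ?C\<close> Pc] .
    moreover have "card (fixed_cosets G Q Q) \<noteq> 0"
      using self_in_fixed_cosets[OF Qs] finite_fixed_cosets[OF finite_carrier subgroup.subset[OF Qs]]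
      by auto
    ultimately show ?thesis unfolding level_correction_def by simp
  qed
  have "card ?C \<noteq> 0"
    using self_in_S_conj_class[OF Pc] finite_S_conj_class[OF finite_carrier P] by auto
  have "vmark G (level_correction X k) P
      = (\<Sum>Q\<in>?C. level_correction X k Q * of_nat (card (fixed_cosets G Q Q)))"
    using Pk by (intro vmark_eq_sum_S_conj_class[OF finite_carrier P])
      (simp add: level_correction_def split: if_splits)
  also have "\<dots> = ?d" using summand \<open>card ?C \<noteq> 0\<close> by simp
  finally show ?thesis by simp
qed

definition marks_F_invariant_from :: "nat \<Rightarrow> ('a set \<Rightarrow> rat) \<Rightarrow> bool" where
  "marks_F_invariant_from k X \<longleftrightarrow>
    (\<forall>P P'. P \<in> \<H> \<longrightarrow> k \<le> card P \<longrightarrow> F_conjugate F P P' \<longrightarrow> vmark G X P = vmark G X P')"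

lemma marks_F_invariant_from_level_correction:
  assumes "marks_F_invariant_from (Suc k) X"
  shows "marks_F_invariant_from k (\<lambda>H. X H + level_correction X k H)"
  unfolding marks_F_invariant_from_def vmark_add
proof (intro allI impI)
  fix P P' assume PH: "P \<in> \<H>" and "k \<le> card P" and PP': "F_conjugate F P P'"
  have P'H: "P' \<in> \<H>" and card: "card P' = card P"
    using mem_if_F_conjugate[OF PH PP'] card_F_conjugate[OF fusion PP'] .
  show "vmark G X P + vmark G (level_correction X k) P
      = vmark G X P' + vmark G (level_correction X k) P'"
  proof (cases "card P = k")
    case True
    then show ?thesis
      using vmark_level_correction_at PH P'H card F_class_max_F_conjugate[OF PP'] by simp
  next
    case False
    then show ?thesis
      using assms \<open>k \<le> card P\<close> PH PP' card vmark_level_correction_above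
        F_conjugate_subgroups[OF fusion PP'] unfolding marks_F_invariant_from_def by simp
  qed
qed

lemma exists_marks_F_invariant_from:
  "\<exists>X. (\<forall>H. X0 H \<le> X H) \<and> (\<forall>P. subgroup P G \<longrightarrow> P \<notin> \<H> \<longrightarrow> vmark G X P = vmark G X0 P)
     \<and> marks_F_invariant_from k X"
proof (induction "Suc (card (carrier G)) - k" arbitrary: k)
  case 0
  have "card P < k" if "P \<in> \<H>" for P
    using 0 card_mono[OF finite_carrier subgroup.subset[OF subgroup_if_mem[OF that]]] by simp
  then have "marks_F_invariant_from k X0"
    unfolding marks_F_invariant_from_def by (auto dest: leD)
  then show ?case by blast
next
  case (Suc n)
  then have "n = Suc (card (carrier G)) - Suc k" by arith
  then obtain X where X0_le: "\<forall>H. X0 H \<le> X H"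
    and outside: "\<forall>P. subgroup P G \<longrightarrow> P \<notin> \<H> \<longrightarrow> vmark G X P = vmark G X0 P"
    and inside: "marks_F_invariant_from (Suc k) X"
    using Suc.hyps(1) by blast
  define X' where "X' H = X H + level_correction X k H" for H
  have "\<forall>H. X0 H \<le> X' H"
    using X0_le level_correction_nonneg unfolding X'_def by (meson add_increasing2)
  moreover have "\<forall>P. subgroup P G \<longrightarrow> P \<notin> \<H> \<longrightarrow> vmark G X' P = vmark G X0 P"
    using outside vmark_level_correction_not_mem unfolding X'_def vmark_add by simp
  moreover have "marks_F_invariant_from k X'"
    unfolding X'_def using marks_F_invariant_from_level_correction[OF inside] .
  ultimately show ?case by blast
qed

end

theorem lemma3:
  fixes S :: "('a, 'b) monoid_scheme" and p :: nat
    and F :: "'a set \<Rightarrow> 'a set \<Rightarrow> ('a \<Rightarrow> 'a) set"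
    and \<H> :: "'a set set" and X0 :: "'a set \<Rightarrow> rat"
  assumes "finite_p_group S p"
    and "fusion_system S F"
    and "\<forall>P \<in> \<H>. subgroup P S"
    and "\<forall>P \<in> \<H>. \<forall>Q. subgroup Q S \<longrightarrow> Q \<subseteq> P \<longrightarrow> Q \<in> \<H>"
    and "\<forall>P \<in> \<H>. \<forall>P'. F_conjugate F P P' \<longrightarrow> P' \<in> \<H>"
    and "\<forall>P P'. subgroup P S \<longrightarrow> subgroup P' S \<longrightarrow> P \<notin> \<H> \<longrightarrow> P' \<notin> \<H> \<longrightarrow>
           F_conjugate F P P' \<longrightarrow> vmark S X0 P = vmark S X0 P'"
  shows "\<exists>X :: 'a set \<Rightarrow> rat.
           (\<forall>P P'. subgroup P S \<longrightarrow> subgroup P' S \<longrightarrow> F_conjugate F P P' \<longrightarrow>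
              vmark S X P = vmark S X P') \<and>
           (\<forall>P. subgroup P S \<longrightarrow> P \<notin> \<H> \<longrightarrow> vmark S X P = vmark S X0 P) \<and>
           nonneg_virtual S (\<lambda>H. X H - X0 H)"
proof -
  have "group S" "finite (carrier S)" using assms(1) unfolding finite_p_group_def by auto
  then interpret fusion_collection S F \<H>
    using assms(2-5) by (intro fusion_collection.intro fusion_collection_axioms.intro) blast+
  obtain X where X0_le: "\<forall>H. X0 H \<le> X H"
    and outside: "\<forall>P. subgroup P S \<longrightarrow> P \<notin> \<H> \<longrightarrow> vmark S X P = vmark S X0 P"
    and inside: "marks_F_invariant_from 0 X"
    using exists_marks_F_invariant_from[of X0 0] by blast
  have "vmark S X P = vmark S X P'"
    if "subgroup P S" "subgroup P' S" "F_conjugate F P P'" for P P'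
  proof (cases "P \<in> \<H>")
    case True
    then show ?thesis using inside that(3) unfolding marks_F_invariant_from_def by simp
  next
    case False
    then have "P' \<notin> \<H>" using mem_if_F_conjugate F_conjugate_sym[OF fusion that(3)] by blast
    then have "vmark S X0 P = vmark S X0 P'" using assms(6) that False by blast
    then show ?thesis using outside that False \<open>P' \<notin> \<H>\<close> by simp
  qed
  moreover have "nonneg_virtual S (\<lambda>H. X H - X0 H)"
    unfolding nonneg_virtual_def vcoeff_def using X0_le by (simp add: sum_nonneg)
  ultimately show ?thesis using outside by blast
qed

end
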